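(* Let $r=(r_0,r_1,r_2,r_3,r_4)\in\mathbb Z^5$ be a quintuple of distinct integers. There is a constant $c=c(r)>0$ such that for every $N\in\mathbb N$ there is a subset $B\subseteq\{0,1,\dots,N-1\}$ with $|B|>Ne^{-c\sqrt{\log N}}$ such that there is no non-constant polynomial $P\in\mathbb Q[x]$ of degree at most $2$ with $P(r_i)\in B$ for all $i=0,\dots,4$.
   Context: The paper phrases the conclusion as "$B$ does not contain any QC5($r$)", where a set $\{a_0,\dots,a_4\}\subseteq\mathbb Z$ is QC5($r$) if $a_i=P(r_i)$ for some $P\in\mathbb Q[x]$ of degree at most 2. *)

theory Defs
  imports Complex_Main "HOL-Computational_Algebra.Polynomial"
begin

definition contains_QC5 :: "(nat \<Rightarrow> int) \<Rightarrow> nat set \<Rightarrow> bool" where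
  "contains_QC5 r B \<longleftrightarrow>
     (\<exists>P :: rat poly. 1 \<le> degree P \<and> degree P \<le> 2 \<and>
        (\<forall>i<5. poly P (of_int (r i)) \<in> of_nat ` B))"

end

theory Submission
  imports Defs
begin

(*
  Let M = W d and let B consist of the base-M numbers whose n digits lie below d and whose digit
  vectors have a fixed sum of squares k.  For a quadratic P, each of P(r_3), P(r_4) is an integer
  linear combination of P(r_0), P(r_1), P(r_2) (Lagrange interpolation, denominators cleared).  W
  exceeds the absolute sum of these coefficients, so the relations cannot carry and hold digit by
  digit: in every digit position j the five digits are the values q_j(r_i) of a quadratic q_j.  Then
  q_0^2 + ... + q_(n-1)^2 - k has degree at most 4 and five roots r_i, so it vanishes, and comparing
  top coefficients makes every q_j constant.  Thus the five values P(r_i) coincide, impossible for a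
  non-constant P of degree at most 2.  By pigeonhole some k captures a fraction 1/(n d^2) of all d^n
  digit vectors; n about sqrt(log N) and d about N^(1/n) / W give the density N exp(-c sqrt(log N)).
*)

(* Interpolation through r 0, r 1, r 2 with denominators cleared, written as a linear relation
   between the values of a quadratic at r 0, r 1, r 2 and r m. *)
definition lagrange_coeff :: "(nat \<Rightarrow> 'a::comm_ring_1) \<Rightarrow> nat \<Rightarrow> nat \<Rightarrow> 'a" where
  "lagrange_coeff r m i =
     (if i = 0 then - ((r m - r 1) * (r m - r 2) * (r 1 - r 2))
      else if i = 1 then (r m - r 0) * (r m - r 2) * (r 0 - r 2)
      else if i = 2 then - ((r m - r 0) * (r m - r 1) * (r 0 - r 1))
      else if i = m then (r 0 - r 1) * (r 0 - r 2) * (r 1 - r 2)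
      else 0)"

lemma sum_lagrange_coeff:
  assumes "m \<in> {3, 4}"
  shows "(\<Sum>i<5. lagrange_coeff r m i * y i) =
    (r 0 - r 1) * (r 0 - r 2) * (r 1 - r 2) * y m
    - ((r m - r 1) * (r m - r 2) * (r 1 - r 2) * y 0
       - (r m - r 0) * (r m - r 2) * (r 0 - r 2) * y 1
       + (r m - r 0) * (r m - r 1) * (r 0 - r 1) * y 2)"
  using assms by (auto simp: eval_nat_numeral lagrange_coeff_def algebra_simps)

lemma of_int_lagrange_coeff:
  "of_int (lagrange_coeff r m i) = lagrange_coeff (\<lambda>i. of_int (r i)) m i"
  by (simp add: lagrange_coeff_def)

lemma poly_degree_le_2:
  fixes p :: "'a::comm_semiring_1 poly"
  assumes "degree p \<le> 2"
  shows "poly p x = coeff p 0 + coeff p 1 * x + coeff p 2 * x ^ 2"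
proof -
  have "poly p x = (\<Sum>i\<le>2. coeff p i * x ^ i)"
    unfolding poly_altdef
    by (rule sum.mono_neutral_left) (use assms in \<open>auto simp: not_le coeff_eq_0\<close>)
  then show ?thesis
    by (simp add: numeral_2_eq_2)
qed

lemma lagrange_relation:
  fixes p :: "'a::comm_ring_1 poly"
  assumes "degree p \<le> 2" and "m \<in> {3, 4}"
  shows "(\<Sum>i<5. lagrange_coeff r m i * poly p (r i)) = 0"
  unfolding sum_lagrange_coeff[OF assms(2)] poly_degree_le_2[OF assms(1)]
  by (simp add: power2_eq_square algebra_simps)

lemma quadratic_interpolation:
  fixes r0 r1 r2 :: "'a::field"
  assumes "r0 \<noteq> r1" "r0 \<noteq> r2" "r1 \<noteq> r2"
  obtains q where "degree q \<le> 2" "poly q r0 = y0" "poly q r1 = y1" "poly q r2 = y2"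
proof
  define q where "q = smult (y0 / ((r0 - r1) * (r0 - r2))) ([:- r1, 1:] * [:- r2, 1:])
    + smult (y1 / ((r1 - r0) * (r1 - r2))) ([:- r0, 1:] * [:- r2, 1:])
    + smult (y2 / ((r2 - r0) * (r2 - r1))) ([:- r0, 1:] * [:- r1, 1:])"
  show "degree q \<le> 2"
    unfolding q_def
    by (intro degree_add_le order.trans[OF degree_smult_le] order.trans[OF degree_mult_le]) auto
  have "poly q x = y0 / ((r0 - r1) * (r0 - r2)) * ((x - r1) * (x - r2))
      + y1 / ((r1 - r0) * (r1 - r2)) * ((x - r0) * (x - r2))
      + y2 / ((r2 - r0) * (r2 - r1)) * ((x - r0) * (x - r1))" for x
    unfolding q_def poly_add poly_smult poly_mult by simp
  then show "poly q r0 = y0" "poly q r1 = y1" "poly q r2 = y2"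
    using assms by simp_all
qed

lemma lagrange_relation_imp_quadratic:
  fixes r y :: "nat \<Rightarrow> 'a::field"
  assumes "inj_on r {..<3}"
    and rel: "\<And>m. m \<in> {3, 4} \<Longrightarrow> (\<Sum>i<5. lagrange_coeff r m i * y i) = 0"
  obtains q where "degree q \<le> 2" "\<And>i. i < 5 \<Longrightarrow> poly q (r i) = y i"
proof -
  have distinct: "r 0 \<noteq> r 1" "r 0 \<noteq> r 2" "r 1 \<noteq> r 2"
    using inj_on_eq_iff[OF assms(1)] by auto
  obtain q where q: "degree q \<le> 2" "poly q (r 0) = y 0" "poly q (r 1) = y 1" "poly q (r 2) = y 2"
    using quadratic_interpolation[OF distinct] by blast
  have "poly q (r m) = y m" if "m \<in> {3, 4}" for m
  proof -
    have "(\<Sum>i<5. lagrange_coeff r m i * poly q (r i)) = (\<Sum>i<5. lagrange_coeff r m i * y i)"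
      using lagrange_relation[OF q(1) that] rel[OF that] by simp
    then have "(r 0 - r 1) * (r 0 - r 2) * (r 1 - r 2) * (poly q (r m) - y m) = 0"
      unfolding sum_lagrange_coeff[OF that] q(2-4) by (simp add: algebra_simps)
    then show ?thesis
      using distinct by simp
  qed
  then have "poly q (r i) = y i" if "i < 5" for i
    using q(2-4) that by (fastforce simp: eval_nat_numeral less_Suc_eq)
  with q(1) show thesis
    using that by blast
qed

lemma degree_eq_0_if_poly_constant_on:
  fixes p :: "'a::{comm_ring_1, ring_no_zero_divisors} poly"
  assumes "degree p < card A" and "\<And>x. x \<in> A \<Longrightarrow> poly p x = c"
  shows "degree p = 0"
proof -
  have "p = [:c:]"
    using assms by (intro poly_eqI_degree[of A]) auto
  then show ?thesis
    by simp
qed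

lemma coeff_power2_at_twice_bound:
  fixes p :: "'a::comm_semiring_1 poly"
  assumes "degree p \<le> D"
  shows "coeff (p ^ 2) (2 * D) = (if degree p = D then lead_coeff p ^ 2 else 0)"
proof (cases "degree p = D")
  case True
  then show ?thesis
    using coeff_mult_degree_sum[of p p] by (simp add: power2_eq_square mult_2)
next
  case False
  then have "degree (p ^ 2) < 2 * D"
    using assms degree_power_le[of p 2] by linarith
  with False show ?thesis
    by (simp add: coeff_eq_0)
qed

lemma degree_eq_0_if_sum_squares_constant:
  fixes q :: "'j \<Rightarrow> 'a::linordered_idom poly"
  assumes "finite J" and "degree (\<Sum>j\<in>J. q j ^ 2) = 0" and "j \<in> J"
  shows "degree (q j) = 0"
proof (rule ccontr)
  assume "degree (q j) \<noteq> 0"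
  define D where "D = Max (degree ` q ` J)"
  have le_D: "degree (q i) \<le> D" if "i \<in> J" for i
    unfolding D_def using assms(1) that by (intro Max_ge) auto
  have "D \<in> degree ` q ` J"
    unfolding D_def using assms(1,3) by (intro Max_in) auto
  then obtain k where "k \<in> J" and k: "degree (q k) = D"
    by auto
  have "0 < D"
    using le_D[OF assms(3)] \<open>degree (q j) \<noteq> 0\<close> by linarith
  then have "q k \<noteq> 0"
    using k by auto
  then have "coeff (q k) D \<noteq> 0"
    using k by (metis leading_coeff_0_iff)
  have "0 < (\<Sum>i\<in>J. coeff (q i ^ 2) (2 * D))"
  proof (rule sum_pos2[OF assms(1) \<open>k \<in> J\<close>])
    show "0 < coeff (q k ^ 2) (2 * D)"
      using coeff_power2_at_twice_bound[OF le_D[OF \<open>k \<in> J\<close>]] k \<open>coeff (q k) D \<noteq> 0\<close> by simp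
    show "0 \<le> coeff (q i ^ 2) (2 * D)" if "i \<in> J" for i
      using coeff_power2_at_twice_bound[OF le_D[OF that]] by simp
  qed
  moreover have "coeff (\<Sum>i\<in>J. q i ^ 2) (2 * D) = 0"
    using assms(2) \<open>0 < D\<close> by (intro coeff_eq_0) simp
  ultimately show False
    by (simp add: coeff_sum)
qed

lemma degree_eq_0_if_sum_squares_constant_on:
  fixes q :: "'j \<Rightarrow> 'a::linordered_idom poly"
  assumes "finite J" and deg: "\<And>j. j \<in> J \<Longrightarrow> degree (q j) \<le> D" and "2 * D < card A"
    and const: "\<And>t. t \<in> A \<Longrightarrow> (\<Sum>j\<in>J. poly (q j) t ^ 2) = c" and "j \<in> J"
  shows "degree (q j) = 0"
proof -
  have "degree (q i ^ 2) \<le> 2 * D" if "i \<in> J" for i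
    using degree_power_le[of "q i" 2] deg[OF that] by linarith
  then have "degree (\<Sum>i\<in>J. q i ^ 2) < card A"
    using degree_sum_le[OF \<open>finite J\<close>] \<open>2 * D < card A\<close> by (meson le_less_trans)
  moreover have "poly (\<Sum>i\<in>J. q i ^ 2) t = c" if "t \<in> A" for t
    using const[OF that] by (simp add: poly_sum)
  ultimately have "degree (\<Sum>i\<in>J. q i ^ 2) = 0"
    by (rule degree_eq_0_if_poly_constant_on)
  then show ?thesis
    by (rule degree_eq_0_if_sum_squares_constant[OF \<open>finite J\<close> _ \<open>j \<in> J\<close>])
qed

lemma horner_sum_less_power:
  fixes xs :: "nat list"
  assumes "set xs \<subseteq> {..<M}"
  shows "horner_sum id M xs < M ^ length xs"
  using assms
proof (induction xs)
  case Nil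
  then show ?case by simp
next
  case (Cons x xs)
  then have "x < M" and "set xs \<subseteq> {..<M}"
    by auto
  with Cons.IH have "horner_sum id M xs + 1 \<le> M ^ length xs"
    by (simp add: id_def)
  have "x + M * horner_sum id M xs < M * (horner_sum id M xs + 1)"
    using \<open>x < M\<close> by simp
  also have "\<dots> \<le> M * M ^ length xs"
    using \<open>horner_sum id M xs + 1 \<le> M ^ length xs\<close> by (rule mult_le_mono2)
  finally show ?case
    by (simp add: id_def)
qed

lemma inj_on_horner_sum:
  "inj_on (horner_sum id M) {xs :: nat list. length xs = n \<and> set xs \<subseteq> {..<M}}"
proof (induction n)
  case 0
  then show ?case by (simp add: inj_on_def)
next
  case (Suc n)
  show ?case
  proof (rule inj_onI)
    fix xs ys :: "nat list"
    assume xs: "xs \<in> {xs. length xs = Suc n \<and> set xs \<subseteq> {..<M}}"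
      and ys: "ys \<in> {xs. length xs = Suc n \<and> set xs \<subseteq> {..<M}}"
      and eq: "horner_sum id M xs = horner_sum id M ys"
    obtain a xs' b ys' where xs': "xs = a # xs'" and ys': "ys = b # ys'"
      using xs ys by (cases xs; cases ys) auto
    have "a < M" "b < M" and eq': "a + M * horner_sum id M xs' = b + M * horner_sum id M ys'"
      using xs ys eq by (auto simp: xs' ys')
    have "a = (a + M * horner_sum id M xs') mod M"
      using \<open>a < M\<close> by simp
    also have "\<dots> = b"
      using \<open>b < M\<close> by (simp only: eq') simp
    finally have "a = b" .
    with eq' \<open>a < M\<close> have "horner_sum id M xs' = horner_sum id M ys'"
      by simp
    then show "xs = ys"
      using inj_onD[OF Suc.IH] xs ys by (simp add: xs' ys' \<open>a = b\<close> id_def)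
  qed
qed

lemma eq_0_if_add_mult_eq_0:
  fixes s t M :: int
  assumes "s + M * t = 0" and "\<bar>s\<bar> < M"
  shows "s = 0 \<and> t = 0"
proof -
  have "s = M * (- t)"
    using assms(1) by simp
  then have "M dvd s"
    by simp
  have "s = 0"
  proof (rule ccontr)
    assume "s \<noteq> 0"
    with \<open>M dvd s\<close> have "\<bar>M\<bar> \<le> \<bar>s\<bar>"
      by (rule dvd_imp_le_int[rotated])
    with assms(2) show False
      by simp
  qed
  with assms show ?thesis
    by simp
qed

lemma relation_holds_digitwise:
  fixes e :: "'i \<Rightarrow> int" and X :: "'i \<Rightarrow> nat list"
  assumes digits: "\<And>i. i \<in> I \<Longrightarrow> length (X i) = n \<and> set (X i) \<subseteq> {..<d}"
    and small: "(\<Sum>i\<in>I. \<bar>e i\<bar>) * int d < int M"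
    and rel: "(\<Sum>i\<in>I. e i * int (horner_sum id M (X i))) = 0"
  shows "\<forall>j<n. (\<Sum>i\<in>I. e i * int (X i ! j)) = 0"
  using digits rel
proof (induction n arbitrary: X)
  case 0
  then show ?case by simp
next
  case (Suc n)
  define t where "t i = tl (X i)" for i
  have t: "length (t i) = n \<and> set (t i) \<subseteq> {..<d}" and "X i ! 0 < d"
    and horner: "horner_sum id M (X i) = X i ! 0 + M * horner_sum id M (t i)"
    and nth_Suc: "X i ! Suc j = t i ! j" if "i \<in> I" for i j
    using Suc.prems(1)[OF that] by (cases "X i"; simp add: t_def)+
  define s where "s = (\<Sum>i\<in>I. e i * int (X i ! 0))"
  define s' where "s' = (\<Sum>i\<in>I. e i * int (horner_sum id M (t i)))"
  have split: "(\<Sum>i\<in>I. e i * int (horner_sum id M (X i))) = s + int M * s'"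
    unfolding s_def s'_def sum_distrib_left sum.distrib[symmetric]
  proof (rule sum.cong)
    fix i assume "i \<in> I"
    show "e i * int (horner_sum id M (X i))
        = e i * int (X i ! 0) + int M * (e i * int (horner_sum id M (t i)))"
      by (simp add: horner[OF \<open>i \<in> I\<close>] algebra_simps)
  qed simp
  have "\<bar>s\<bar> < int M"
  proof -
    have "\<bar>s\<bar> \<le> (\<Sum>i\<in>I. \<bar>e i\<bar> * int (X i ! 0))"
      unfolding s_def by (rule order.trans[OF sum_abs]) (simp add: abs_mult)
    also have "\<dots> \<le> (\<Sum>i\<in>I. \<bar>e i\<bar> * int d)"
      using \<open>\<And>i. i \<in> I \<Longrightarrow> X i ! 0 < d\<close>
      by (intro sum_mono mult_left_mono) (auto intro: less_imp_le)
    finally show ?thesis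
      using small by (simp add: sum_distrib_right)
  qed
  then have "s = 0 \<and> s' = 0"
    using Suc.prems(2) split by (intro eq_0_if_add_mult_eq_0) (simp_all add: id_def)
  moreover have "\<forall>j<n. (\<Sum>i\<in>I. e i * int (t i ! j)) = 0"
    using Suc.IH[of t] t \<open>s = 0 \<and> s' = 0\<close> unfolding s'_def by blast
  ultimately show ?case
    unfolding s_def by (auto simp: less_Suc_eq_0_disj nth_Suc cong: sum.cong)
qed

definition digit_sphere :: "nat \<Rightarrow> nat \<Rightarrow> nat \<Rightarrow> nat list set" where
  "digit_sphere d n k = {xs. set xs \<subseteq> {..<d} \<and> length xs = n \<and> (\<Sum>x\<leftarrow>xs. x ^ 2) = k}"

lemma inj_on_of_int_comp:
  fixes r :: "'i \<Rightarrow> int"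
  assumes "inj_on r A"
  shows "inj_on (\<lambda>i. of_int (r i) :: 'a::ring_char_0) A"
  using assms by (auto simp: inj_on_def)

lemma digit_columns_on_quadratic:
  fixes r :: "nat \<Rightarrow> int" and P :: "rat poly" and X :: "nat \<Rightarrow> nat list"
  assumes "inj_on r {..<3}"
    and small: "\<And>m. m \<in> {3, 4} \<Longrightarrow> (\<Sum>i<5. \<bar>lagrange_coeff r m i\<bar>) * int d < int M"
    and digits: "\<And>i. i < 5 \<Longrightarrow> length (X i) = n \<and> set (X i) \<subseteq> {..<d}"
    and "degree P \<le> 2"
    and P_values: "\<And>i. i < 5 \<Longrightarrow> poly P (of_int (r i)) = of_nat (horner_sum id M (X i))"
    and "j < n"
  shows "\<exists>q :: rat poly. degree q \<le> 2 \<and> (\<forall>i<5. poly q (of_int (r i)) = of_nat (X i ! j))"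
proof -
  define R where "R = (\<lambda>i. of_int (r i) :: rat)"
  have rel: "(\<Sum>i<5. lagrange_coeff R m i * of_nat (X i ! j)) = 0" if "m \<in> {3, 4}" for m
  proof -
    have "of_int (\<Sum>i<5. lagrange_coeff r m i * int (horner_sum id M (X i)))
        = (\<Sum>i<5. lagrange_coeff R m i * poly P (R i))"
      by (simp add: R_def of_int_lagrange_coeff P_values)
    also have "\<dots> = 0"
      by (rule lagrange_relation[OF \<open>degree P \<le> 2\<close> that])
    finally have "(\<Sum>i<5. lagrange_coeff r m i * int (horner_sum id M (X i))) = 0"
      by (simp only: of_int_eq_0_iff)
    then have "\<forall>j<n. (\<Sum>i<5. lagrange_coeff r m i * int (X i ! j)) = 0"
      using digits by (intro relation_holds_digitwise[OF _ small[OF that]]) auto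
    with \<open>j < n\<close> have "(\<Sum>i<5. lagrange_coeff r m i * int (X i ! j)) = 0"
      by blast
    then have "of_int (\<Sum>i<5. lagrange_coeff r m i * int (X i ! j)) = (0 :: rat)"
      by simp
    then show ?thesis
      by (simp add: R_def of_int_lagrange_coeff)
  qed
  have "inj_on R {..<3}"
    unfolding R_def using assms(1) by (rule inj_on_of_int_comp)
  then obtain q where "degree q \<le> 2" "\<And>i. i < 5 \<Longrightarrow> poly q (R i) = of_nat (X i ! j)"
    using lagrange_relation_imp_quadratic[OF _ rel] by blast
  then show ?thesis
    unfolding R_def by blast
qed

lemma digit_sphere_quadratic_columns_equal:
  fixes R :: "nat \<Rightarrow> 'a::linordered_idom" and q :: "nat \<Rightarrow> 'a poly"
  assumes "inj_on R {..<5}"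
    and X: "\<And>i. i < 5 \<Longrightarrow> X i \<in> digit_sphere d n k"
    and q_deg: "\<And>j. j < n \<Longrightarrow> degree (q j) \<le> 2"
    and q_values: "\<And>i j. i < 5 \<Longrightarrow> j < n \<Longrightarrow> poly (q j) (R i) = of_nat (X i ! j)"
    and "i < 5"
  shows "X i = X 0"
proof -
  have "(\<Sum>j<n. poly (q j) t ^ 2) = of_nat k" if t: "t \<in> R ` {..<5}" for t
  proof -
    obtain i where "i < 5" and "t = R i"
      using t by blast
    have "(\<Sum>j<n. (X i ! j) ^ 2) = k"
      using X[OF \<open>i < 5\<close>] by (auto simp: digit_sphere_def sum_list_sum_nth atLeast0LessThan)
    then show ?thesis
      using \<open>i < 5\<close> by (simp add: \<open>t = R i\<close> q_values flip: of_nat_power of_nat_sum)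
  qed
  moreover have "card (R ` {..<5}) = 5"
    using \<open>inj_on R {..<5}\<close> by (simp add: card_image)
  ultimately have "degree (q j) = 0" if "j < n" for j
    using q_deg that
    by (intro degree_eq_0_if_sum_squares_constant_on[of "{..<n}" q 2 "R ` {..<5}"]) auto
  then have "poly (q j) x = coeff (q j) 0" if "j < n" for j x
    using degree_0_id[of "q j"] that by (metis mult_zero_right add.right_neutral poly_0 poly_pCons)
  then have same_digit: "X i ! j = X 0 ! j" if "j < n" for j
    using q_values[OF \<open>i < 5\<close> that] q_values[OF _ that, of 0] that
    by (metis of_nat_eq_iff zero_less_numeral)
  have "length (X i) = n" and "length (X 0) = n"
    using X[OF \<open>i < 5\<close>] X[of 0] by (simp_all add: digit_sphere_def)
  then show ?thesis
    using same_digit by (intro nth_equalityI) simp_all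
qed

lemma digit_sphere_QC5_free:
  fixes r :: "nat \<Rightarrow> int"
  assumes inj: "inj_on r {..<5}"
    and small: "\<And>m. m \<in> {3, 4} \<Longrightarrow> (\<Sum>i<5. \<bar>lagrange_coeff r m i\<bar>) * int d < int M"
  shows "\<not> contains_QC5 r (horner_sum id M ` digit_sphere d n k)"
proof
  define R where "R = (\<lambda>i. of_int (r i) :: rat)"
  assume "contains_QC5 r (horner_sum id M ` digit_sphere d n k)"
  then obtain P :: "rat poly" where deg: "1 \<le> degree P" "degree P \<le> 2"
    and "\<forall>i<5. \<exists>xs\<in>digit_sphere d n k. poly P (R i) = of_nat (horner_sum id M xs)"
    unfolding contains_QC5_def R_def by (auto simp: image_iff)
  then have "\<forall>i\<in>{..<5}. \<exists>xs. xs \<in> digit_sphere d n k \<and> poly P (R i) = of_nat (horner_sum id M xs)"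
    by blast
  from bchoice[OF this] obtain X
    where "\<forall>i\<in>{..<5}. X i \<in> digit_sphere d n k \<and> poly P (R i) = of_nat (horner_sum id M (X i))"
    by blast
  then have X: "\<And>i. i < 5 \<Longrightarrow> X i \<in> digit_sphere d n k"
    and P_values: "\<And>i. i < 5 \<Longrightarrow> poly P (R i) = of_nat (horner_sum id M (X i))"
    by auto
  have "\<forall>j\<in>{..<n}. \<exists>q :: rat poly. degree q \<le> 2 \<and> (\<forall>i<5. poly q (R i) = of_nat (X i ! j))"
    using digit_columns_on_quadratic[OF inj_on_subset[OF inj] small _ deg(2) P_values[unfolded R_def]] X
    by (simp add: R_def digit_sphere_def)
  from bchoice[OF this] obtain q
    where "\<forall>j\<in>{..<n}. degree (q j) \<le> 2 \<and> (\<forall>i<5. poly (q j) (R i) = of_nat (X i ! j))"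
    by blast
  then have "X i = X 0" if "i < 5" for i
    using inj_on_of_int_comp[OF inj, where 'a = rat] X that unfolding R_def
    by (intro digit_sphere_quadratic_columns_equal[where q = q]) auto
  then have P_const: "poly P x = poly P (R 0)" if "x \<in> R ` {..<5}" for x
    using that P_values by (metis lessThan_iff zero_less_numeral image_iff)
  have "degree P < card (R ` {..<5})"
    using deg(2) inj_on_of_int_comp[OF inj, where 'a = rat] unfolding R_def by (simp add: card_image)
  then have "degree P = 0"
    using P_const by (rule degree_eq_0_if_poly_constant_on)
  with deg(1) show False
    by simp
qed

(* In base carry_bound r * d the Lagrange relations applied to digits below d cannot carry. *)
definition carry_bound :: "(nat \<Rightarrow> int) \<Rightarrow> nat" where
  "carry_bound r = nat (1 + (\<Sum>m\<in>{3, 4}. \<Sum>i<5. \<bar>lagrange_coeff r m i\<bar>))"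

lemma one_le_carry_bound: "1 \<le> carry_bound r"
proof -
  have "0 \<le> (\<Sum>m\<in>{3, 4}. \<Sum>i<5. \<bar>lagrange_coeff r m i\<bar>)"
    by (intro sum_nonneg) auto
  then show ?thesis
    unfolding carry_bound_def by linarith
qed

lemma less_carry_bound:
  assumes "m \<in> {3, 4}"
  shows "(\<Sum>i<5. \<bar>lagrange_coeff r m i\<bar>) < int (carry_bound r)"
proof -
  have "(\<Sum>i<5. \<bar>lagrange_coeff r m i\<bar>) \<le> (\<Sum>m\<in>{3, 4}. \<Sum>i<5. \<bar>lagrange_coeff r m i\<bar>)"
    using assms by (intro member_le_sum) (auto intro: sum_nonneg)
  then show ?thesis
    unfolding carry_bound_def by linarith
qed

lemma exists_large_fiber:
  assumes "finite S" and "finite T" and "f ` S \<subseteq> T"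
  shows "\<exists>k. card S \<le> card T * card {x\<in>S. f x = k}"
proof (rule ccontr)
  assume "\<nexists>k. card S \<le> card T * card {x\<in>S. f x = k}"
  then have less: "card T * card {x\<in>S. f x = k} < card S" for k
    by (simp add: not_le)
  then have "T \<noteq> {}"
    using less[of undefined] \<open>f ` S \<subseteq> T\<close> by auto
  have "card T * card S = card T * (\<Sum>k\<in>T. card {x\<in>S. f x = k})"
    using sum.group[OF assms, of "\<lambda>_. 1 :: nat"] by simp
  also have "\<dots> < (\<Sum>k\<in>T. card S)"
    unfolding sum_distrib_left using less \<open>T \<noteq> {}\<close> \<open>finite T\<close> by (intro sum_strict_mono) auto
  finally show False
    by simp
qed

lemma large_digit_sphere:
  assumes "1 \<le> n"
  shows "\<exists>k. d ^ n \<le> n * d\<^sup>2 * card (digit_sphere d n k)"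
proof -
  define S where "S = {xs. set xs \<subseteq> {..<d} \<and> length xs = n}"
  have "(\<Sum>x\<leftarrow>xs. x ^ 2) \<in> {..<n * d\<^sup>2}" if "xs \<in> S" for xs
  proof -
    have "(\<Sum>x\<leftarrow>xs. x ^ 2) < (\<Sum>x\<leftarrow>xs. d\<^sup>2)"
      using that assms unfolding S_def
      by (intro sum_list_strict_mono) (auto intro: power_strict_mono)
    then show ?thesis
      using that unfolding S_def by (simp add: sum_list_triv)
  qed
  then obtain k where "card S \<le> n * d\<^sup>2 * card {xs\<in>S. (\<Sum>x\<leftarrow>xs. x ^ 2) = k}"
    using exists_large_fiber[of S "{..<n * d\<^sup>2}" "\<lambda>xs. \<Sum>x\<leftarrow>xs. x ^ 2"]
    unfolding S_def by (auto simp: finite_lists_length_eq)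
  moreover have "card S = d ^ n"
    unfolding S_def by (simp add: card_lists_length_eq)
  moreover have "{xs\<in>S. (\<Sum>x\<leftarrow>xs. x ^ 2) = k} = digit_sphere d n k"
    unfolding S_def digit_sphere_def by auto
  ultimately show ?thesis
    by auto
qed

lemma exists_QC5_free_subset:
  fixes r :: "nat \<Rightarrow> int"
  assumes "inj_on r {..<5}" and "1 \<le> n" and "1 \<le> d" and "(carry_bound r * d) ^ n \<le> N"
  shows "\<exists>B \<subseteq> {..<N}. d ^ n \<le> n * d\<^sup>2 * card B \<and> \<not> contains_QC5 r B"
proof -
  define M where "M = carry_bound r * d"
  obtain k where k: "d ^ n \<le> n * d\<^sup>2 * card (digit_sphere d n k)"
    using large_digit_sphere[OF \<open>1 \<le> n\<close>] by blast
  define B where "B = horner_sum id M ` digit_sphere d n k"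
  have "d \<le> M"
    unfolding M_def using one_le_carry_bound[of r] by simp
  then have digits_M: "digit_sphere d n k \<subseteq> {xs. length xs = n \<and> set xs \<subseteq> {..<M}}"
    unfolding digit_sphere_def by auto
  have "(\<Sum>i<5. \<bar>lagrange_coeff r m i\<bar>) * int d < int M" if "m \<in> {3, 4}" for m
    using less_carry_bound[OF that] \<open>1 \<le> d\<close> unfolding M_def by simp
  then have "\<not> contains_QC5 r B"
    unfolding B_def by (rule digit_sphere_QC5_free[OF \<open>inj_on r {..<5}\<close>])
  moreover have "B \<subseteq> {..<N}"
  proof
    fix b assume "b \<in> B"
    then obtain xs where "xs \<in> digit_sphere d n k" and "b = horner_sum id M xs"
      unfolding B_def by blast
    with digits_M have "b < M ^ n"
      using horner_sum_less_power[of xs M] by auto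
    with \<open>(carry_bound r * d) ^ n \<le> N\<close> show "b \<in> {..<N}"
      unfolding M_def by simp
  qed
  moreover have "card B = card (digit_sphere d n k)"
    unfolding B_def using inj_on_subset[OF inj_on_horner_sum digits_M] by (rule card_image)
  ultimately show ?thesis
    using k by auto
qed

lemma nat_floor_bounds:
  fixes x :: real
  assumes "1 \<le> x"
  shows "1 \<le> nat \<lfloor>x\<rfloor>" and "real (nat \<lfloor>x\<rfloor>) \<le> x" and "x / 2 \<le> real (nat \<lfloor>x\<rfloor>)"
proof -
  have "1 \<le> \<lfloor>x\<rfloor>"
    using assms by simp
  moreover have "x - 1 < real_of_int \<lfloor>x\<rfloor>"
    by simp
  moreover have "real (nat \<lfloor>x\<rfloor>) = real_of_int \<lfloor>x\<rfloor>"
    using \<open>1 \<le> \<lfloor>x\<rfloor>\<close> by simp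
  ultimately show "1 \<le> nat \<lfloor>x\<rfloor>" and "real (nat \<lfloor>x\<rfloor>) \<le> x" and "x / 2 \<le> real (nat \<lfloor>x\<rfloor>)"
    by (linarith, simp, linarith)
qed

lemma exists_digit_parameters:
  fixes W N :: nat
  assumes "1 \<le> W" and "2 \<le> N" and big: "2 + ln W \<le> sqrt (ln N)"
  obtains n d where "1 \<le> n" and "1 \<le> d" and "(W * d) ^ n \<le> N"
    and "real N \<le> (2 * real W) ^ n * real d ^ n"
    and "real n \<le> sqrt (ln N)" and "real d \<le> exp (2 * sqrt (ln N))"
proof
  define s where "s = sqrt (ln N)"
  have s_sq: "ln N = s * s"
    unfolding s_def using \<open>2 \<le> N\<close> by simp
  have "0 \<le> ln (real W)"
    using \<open>1 \<le> W\<close> by simp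
  then have "2 \<le> s" and "ln W \<le> s"
    using big unfolding s_def by linarith+
  define n where "n = nat \<lfloor>s\<rfloor>"
  have n: "1 \<le> n" "real n \<le> s" "s / 2 \<le> real n"
    unfolding n_def using nat_floor_bounds[of s] \<open>2 \<le> s\<close> by auto
  show "1 \<le> n" and "real n \<le> sqrt (ln N)"
    using n unfolding s_def by auto
  define u where "u = exp (ln N / n)"
  have "u ^ n = N"
    unfolding u_def using n(1) \<open>2 \<le> N\<close> by (simp add: exp_of_nat_mult[symmetric])
  have "s * n \<le> ln N" and "ln N \<le> 2 * s * n"
    unfolding s_sq using n \<open>2 \<le> s\<close> by (simp_all add: mult_left_mono)
  then have "s \<le> ln N / n" and "ln N / n \<le> 2 * s"
    using n(1) by (simp_all add: field_simps)
  then have u_le: "u \<le> exp (2 * s)"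
    unfolding u_def by simp
  have "real W = exp (ln W)"
    using \<open>1 \<le> W\<close> by simp
  also have "\<dots> \<le> u"
    unfolding u_def using \<open>ln W \<le> s\<close> \<open>s \<le> ln N / n\<close> by simp
  finally have "real W \<le> u" .
  define d where "d = nat \<lfloor>u / W\<rfloor>"
  have d: "1 \<le> d" "real d \<le> u / W" "u / (2 * W) \<le> real d"
    unfolding d_def using nat_floor_bounds[of "u / W"] \<open>real W \<le> u\<close> \<open>1 \<le> W\<close> by auto
  show "1 \<le> d"
    using d(1) .
  have "real W * real d \<le> u"
    using d(2) \<open>1 \<le> W\<close> by (simp add: field_simps)
  then have "real ((W * d) ^ n) \<le> u ^ n"
    by (simp add: power_mono)
  then show "(W * d) ^ n \<le> N"
    using \<open>u ^ n = N\<close> by linarith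
  have "real N = (2 * real W) ^ n * (u / (2 * W)) ^ n"
    using \<open>u ^ n = N\<close> \<open>1 \<le> W\<close> by (simp add: power_divide)
  also have "\<dots> \<le> (2 * real W) ^ n * real d ^ n"
    using d(3) \<open>1 \<le> W\<close> \<open>real W \<le> u\<close> by (intro mult_left_mono power_mono) auto
  finally show "real N \<le> (2 * real W) ^ n * real d ^ n" .
  have "u / W \<le> u"
    using \<open>1 \<le> W\<close> \<open>real W \<le> u\<close> by (simp add: divide_le_eq)
  with d(2) u_le show "real d \<le> exp (2 * sqrt (ln N))"
    unfolding s_def by linarith
qed

lemma digit_parameters_density:
  fixes W n d N :: nat and s :: real
  assumes "1 \<le> W" and "1 \<le> n" and "1 \<le> d" and "real N \<le> (2 * real W) ^ n * real d ^ n"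
    and "real n \<le> s" and "real d \<le> exp (2 * s)"
  shows "real N * exp (- (ln (2 * real W) + 5) * s) < real (d ^ n) / real (n * d\<^sup>2)"
proof -
  have "0 \<le> s"
    using \<open>real n \<le> s\<close> by linarith
  have "(2 * real W) ^ n = exp (n * ln (2 * real W))"
    using \<open>1 \<le> W\<close> by (simp add: exp_of_nat_mult)
  also have "\<dots> \<le> exp (s * ln (2 * real W))"
    using \<open>real n \<le> s\<close> \<open>1 \<le> W\<close> by (simp add: mult_right_mono)
  finally have pow_le: "(2 * real W) ^ n \<le> exp (s * ln (2 * real W))" .
  have "real (n * d\<^sup>2) \<le> s * exp (2 * s) ^ 2"
    using \<open>real n \<le> s\<close> \<open>real d \<le> exp (2 * s)\<close> \<open>0 \<le> s\<close> by (simp add: mult_mono power_mono)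
  also have "\<dots> = s * exp (4 * s)"
    by (simp add: power2_eq_square mult_exp_exp)
  also have "\<dots> < exp s * exp (4 * s)"
    using exp_ge_add_one_self[of s] by (simp del: exp_ge_add_one_self)
  finally have n_d: "real (n * d\<^sup>2) < exp (5 * s)"
    by (simp add: mult_exp_exp)
  have "real N * exp (- (ln (2 * real W) + 5) * s) = real N / (exp (s * ln (2 * real W)) * exp (5 * s))"
    by (simp add: mult_exp_exp exp_minus field_simps)
  also have "\<dots> \<le> ((2 * real W) ^ n * real d ^ n) / ((2 * real W) ^ n * exp (5 * s))"
    using \<open>real N \<le> (2 * real W) ^ n * real d ^ n\<close> pow_le \<open>1 \<le> W\<close> by (intro frac_le) auto
  also have "\<dots> = real (d ^ n) / exp (5 * s)"
    using \<open>1 \<le> W\<close> by (subst mult_divide_mult_cancel_left) simp_all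
  also have "\<dots> < real (d ^ n) / real (n * d\<^sup>2)"
    using n_d \<open>1 \<le> d\<close> \<open>1 \<le> n\<close> by (intro divide_strict_left_mono) auto
  finally show ?thesis .
qed

lemma not_contains_QC5_singleton:
  fixes r :: "nat \<Rightarrow> int"
  assumes "inj_on r {..<5}"
  shows "\<not> contains_QC5 r {b}"
proof
  define A where "A = (\<lambda>i. of_int (r i) :: rat) ` {..<5}"
  assume "contains_QC5 r {b}"
  then obtain P :: "rat poly" where "1 \<le> degree P" "degree P \<le> 2"
    and P_const: "\<And>x. x \<in> A \<Longrightarrow> poly P x = of_nat b"
    unfolding contains_QC5_def A_def by auto
  moreover have "degree P < card A"
    using \<open>degree P \<le> 2\<close> inj_on_of_int_comp[OF assms, where 'a = rat]
    unfolding A_def by (simp add: card_image)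
  ultimately show False
    using degree_eq_0_if_poly_constant_on[OF _ P_const] by simp
qed

lemma exists_dense_QC5_free_subset:
  fixes r :: "nat \<Rightarrow> int"
  assumes "inj_on r {..<5}" and "2 \<le> N" and "2 + ln (carry_bound r) \<le> sqrt (ln N)"
  shows "\<exists>B \<subseteq> {..<N}. real N * exp (- (ln (2 * real (carry_bound r)) + 5) * sqrt (ln N)) < card B
    \<and> \<not> contains_QC5 r B"
proof -
  obtain n d where "1 \<le> n" "1 \<le> d" "(carry_bound r * d) ^ n \<le> N"
    "real N \<le> (2 * real (carry_bound r)) ^ n * real d ^ n"
    "real n \<le> sqrt (ln N)" "real d \<le> exp (2 * sqrt (ln N))"
    using exists_digit_parameters[OF one_le_carry_bound assms(2,3)] by blast
  then have density: "real N * exp (- (ln (2 * real (carry_bound r)) + 5) * sqrt (ln N))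
      < real (d ^ n) / real (n * d\<^sup>2)"
    by (intro digit_parameters_density[OF one_le_carry_bound])
  obtain B where "B \<subseteq> {..<N}" and B_large: "d ^ n \<le> n * d\<^sup>2 * card B" and "\<not> contains_QC5 r B"
    using exists_QC5_free_subset[OF assms(1) \<open>1 \<le> n\<close> \<open>1 \<le> d\<close> \<open>(carry_bound r * d) ^ n \<le> N\<close>]
    by blast
  have "real (d ^ n) / real (n * d\<^sup>2) \<le> card B"
    using B_large \<open>1 \<le> n\<close> \<open>1 \<le> d\<close> by (simp add: pos_divide_le_eq mult.commute flip: of_nat_mult)
  with density \<open>B \<subseteq> {..<N}\<close> \<open>\<not> contains_QC5 r B\<close> show ?thesis
    by (intro exI[of _ B]) simp
qed

lemma mult_exp_neg_sqrt_ln_less_one: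
  fixes x c :: real
  assumes "1 < x" and "sqrt (ln x) < c"
  shows "x * exp (- c * sqrt (ln x)) < 1"
proof -
  have "0 < sqrt (ln x)"
    using assms(1) by simp
  then have "sqrt (ln x) * sqrt (ln x) < c * sqrt (ln x)"
    using assms(2) by (rule mult_strict_right_mono[rotated])
  then have "ln x < c * sqrt (ln x)"
    using assms(1) by simp
  then have "exp (ln x - c * sqrt (ln x)) < 1"
    by simp
  then show ?thesis
    using assms(1) by (simp add: exp_diff exp_minus field_simps)
qed

theorem theorem12p7:
  fixes r :: "nat \<Rightarrow> int"
  assumes "inj_on r {..<5}"
  shows "\<exists>c::real. c > 0 \<and>
    (\<forall>N::nat. N \<ge> 2 \<longrightarrow>
      (\<exists>B. B \<subseteq> {..<N} \<and>
           real (card B) > real N * exp (- c * sqrt (ln (real N))) \<and>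
           \<not> contains_QC5 r B))"
proof -
  define W where "W = carry_bound r"
  define c where "c = ln (2 * real W) + 5"
  have "1 \<le> W"
    unfolding W_def by (rule one_le_carry_bound)
  then have "0 \<le> ln W" and "ln W + 5 \<le> c"
    unfolding c_def by simp_all
  have "\<exists>B. B \<subseteq> {..<N} \<and> real (card B) > real N * exp (- c * sqrt (ln N)) \<and> \<not> contains_QC5 r B"
    if "2 \<le> N" for N
  proof (cases "2 + ln W \<le> sqrt (ln N)")
    case True
    then show ?thesis
      using exists_dense_QC5_free_subset[OF assms \<open>2 \<le> N\<close>] unfolding W_def c_def by blast
  next
    case False
    with \<open>ln W + 5 \<le> c\<close> have "real N * exp (- c * sqrt (ln N)) < 1"
      using \<open>2 \<le> N\<close> by (intro mult_exp_neg_sqrt_ln_less_one) auto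
    then show ?thesis
      using not_contains_QC5_singleton[OF assms] \<open>2 \<le> N\<close> by (intro exI[of _ "{0}"]) auto
  qed
  moreover have "0 < c"
    using \<open>0 \<le> ln W\<close> \<open>ln W + 5 \<le> c\<close> by linarith
  ultimately show ?thesis
    by blast
qed

end
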